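(* There exist absolute constants $c_1,c_2>0$ such that for every $M\in\{0,1\}^{m\times n}$, $$c_1\operatorname{disc}^{+}(M)\leq \operatorname{pdisc}_0(M)\leq c_2\operatorname{disc}^{+}(M)\quad\text{and}\quad c_1\operatorname{disc}^{-}(M)\leq \operatorname{pdisc}_0(M)\leq c_2\operatorname{disc}^{-}(M).$$
   Context: For $M\in\{0,1\}^{m\times n}$, $|M|$ is the number of $1$ entries, $p=|M|/(mn)$, and for $X\subset[m]$, $Y\subset[n]$, $\operatorname{disc}(X,Y)=|M[X\times Y]|-p|X||Y|$, where $|M[X\times Y]|$ is the number of $1$ entries of the submatrix with rows $X$ and columns $Y$; $\operatorname{disc}^{+}(M)=\max_{X,Y}\operatorname{disc}(X,Y)$ and $\operatorname{disc}^{-}(M)=\max_{X,Y}(-\operatorname{disc}(X,Y))$. Further, $\operatorname{pdisc}_0(M)=\max\left(\sum_{i,j}M_{i,j}\langle v_i,w_j\rangle-p\sum_{i,j}\langle v_i,w_j\rangle\right)$, the maximum over all $v_1,\dots,v_m,w_1,\dots,w_n\in\mathbb{R}^{m+n}$ with $\|v_i\|_2\leq1$, $\|w_j\|_2\leq 1$. *)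

theory Defs
  imports Complex_Main
begin

text \<open>A matrix M in {0,1}^(m x n) is represented as M :: nat => nat => real,
  with rows indexed by {..<m} and columns by {..<n}; entries outside are irrelevant.\<close>

definition ones :: "nat \<Rightarrow> nat \<Rightarrow> (nat \<Rightarrow> nat \<Rightarrow> real) \<Rightarrow> nat set \<Rightarrow> nat set \<Rightarrow> real" where
  "ones m n M X Y = (\<Sum>i\<in>X. \<Sum>j\<in>Y. M i j)"

definition density :: "nat \<Rightarrow> nat \<Rightarrow> (nat \<Rightarrow> nat \<Rightarrow> real) \<Rightarrow> real" where
  "density m n M = ones m n M {..<m} {..<n} / (real m * real n)"

definition disc :: "nat \<Rightarrow> nat \<Rightarrow> (nat \<Rightarrow> nat \<Rightarrow> real) \<Rightarrow> nat set \<Rightarrow> nat set \<Rightarrow> real" where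
  "disc m n M X Y = ones m n M X Y - density m n M * real (card X) * real (card Y)"

definition disc_plus :: "nat \<Rightarrow> nat \<Rightarrow> (nat \<Rightarrow> nat \<Rightarrow> real) \<Rightarrow> real" where
  "disc_plus m n M = Max {disc m n M X Y | X Y. X \<subseteq> {..<m} \<and> Y \<subseteq> {..<n}}"

definition disc_minus :: "nat \<Rightarrow> nat \<Rightarrow> (nat \<Rightarrow> nat \<Rightarrow> real) \<Rightarrow> real" where
  "disc_minus m n M = Max {- disc m n M X Y | X Y. X \<subseteq> {..<m} \<and> Y \<subseteq> {..<n}}"

text \<open>Vectors in R^(m+n) are functions nat => real, using coordinates {..<m+n}.\<close>

definition ip :: "nat \<Rightarrow> (nat \<Rightarrow> real) \<Rightarrow> (nat \<Rightarrow> real) \<Rightarrow> real" where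
  "ip d x y = (\<Sum>k<d. x k * y k)"

definition pdisc0 :: "nat \<Rightarrow> nat \<Rightarrow> (nat \<Rightarrow> nat \<Rightarrow> real) \<Rightarrow> real" where
  "pdisc0 m n M = Sup {(\<Sum>i<m. \<Sum>j<n. M i j * ip (m+n) (v i) (w j))
                       - density m n M * (\<Sum>i<m. \<Sum>j<n. ip (m+n) (v i) (w j)) | v w.
          (\<forall>i<m. sqrt (ip (m+n) (v i) (v i)) \<le> 1) \<and> (\<forall>j<n. sqrt (ip (m+n) (w j) (w j)) \<le> 1)}"

end

theory Submission
  imports Defs "HOL-Library.FuncSet"
begin

text \<open>Write \<open>A = M - p\<close> for the centred matrix, so that \<open>disc(X, Y)\<close> is the sum of \<open>A\<close>
  over \<open>X \<times> Y\<close>. One-dimensional vectors \<open>\<plusminus>e\<^sub>0\<close> placed on \<open>X\<close> and \<open>Y\<close> show that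
  \<open>disc\<^sup>+\<close> and \<open>disc\<^sup>-\<close> are at most \<open>pdisc\<^sub>0\<close>. Conversely \<open>pdisc\<^sub>0\<close> is at most the vector
  (semidefinite) relaxation of the bilinear form of \<open>A\<close>, which by Grothendieck's inequality is at
  most \<open>128\<close> times its maximum over \<open>[-1,1]\<^sup>m \<times> [-1,1]\<^sup>n\<close>. Splitting \<open>x\<close> and \<open>y\<close> into
  positive and negative parts and using that a bilinear form on \<open>[0,1]\<^sup>m \<times> [0,1]\<^sup>n\<close> is
  maximised at a vertex bounds that maximum by \<open>2 disc\<^sup>+ + 2 disc\<^sup>-\<close>. Finally, \<open>A\<close> sums to
  zero, so the discrepancies of the four rectangles cut out by \<open>X\<close>, \<open>Y\<close> and their
  complements sum to zero, whence \<open>disc\<^sup>- \<le> 3 disc\<^sup>+\<close> and \<open>disc\<^sup>+ \<le> 3 disc\<^sup>-\<close>.\<close>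

section \<open>Projections onto sign vectors\<close>

definition sign_vectors :: "nat \<Rightarrow> (nat \<Rightarrow> real) set" where
  "sign_vectors d = {..<d} \<rightarrow>\<^sub>E {-1, 1}"

lemma finite_sign_vectors: "finite (sign_vectors d)"
  unfolding sign_vectors_def by (rule finite_PiE) auto

lemma card_sign_vectors: "card (sign_vectors d) = 2 ^ d"
  unfolding sign_vectors_def by (simp add: card_PiE numeral_2_eq_2)

lemma sum_sign_vectors_0: "(\<Sum>e\<in>sign_vectors 0. F e) = F (\<lambda>_. undefined)"
  unfolding sign_vectors_def by simp

lemma sum_sign_vectors_Suc:
  "(\<Sum>e\<in>sign_vectors (Suc d). F e) = (\<Sum>e\<in>sign_vectors d. F (e(d := 1)) + F (e(d := -1)))"
proof -
  let ?ext = "\<lambda>(s, e). e(d := s)"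
  have img: "sign_vectors (Suc d) = ?ext ` ({-1, 1} \<times> sign_vectors d)"
    unfolding sign_vectors_def lessThan_Suc by (simp add: PiE_insert_eq)
  have inj: "inj_on ?ext ({-1, 1} \<times> sign_vectors d)"
    unfolding sign_vectors_def by (rule inj_combinator) simp
  have "(\<Sum>e\<in>sign_vectors (Suc d). F e) = (\<Sum>s\<in>{-1::real, 1}. \<Sum>e\<in>sign_vectors d. F (e(d := s)))"
    unfolding img sum.reindex[OF inj] sum.cartesian_product by (simp add: case_prod_beta)
  also have "\<dots> = (\<Sum>e\<in>sign_vectors d. F (e(d := 1)) + F (e(d := -1)))"
    by (simp add: sum.distrib add.commute)
  finally show ?thesis .
qed

lemma ip_Suc_fun_upd: "ip (Suc d) u (e(d := s)) = ip d u e + u d * s"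
proof -
  have "(\<Sum>k<d. u k * (e(d := s)) k) = (\<Sum>k<d. u k * e k)"
    by (rule sum.cong) auto
  then show ?thesis
    unfolding ip_def by simp
qed

lemma ip_Suc: "ip (Suc d) u v = ip d u v + u d * v d"
  unfolding ip_def by simp

lemma ip_self_nonneg: "0 \<le> ip d u u"
  unfolding ip_def by (intro sum_nonneg) simp

lemma abs_ip_le_one:
  assumes "ip d x x \<le> 1" "ip d y y \<le> 1"
  shows "\<bar>ip d x y\<bar> \<le> 1"
proof -
  have "\<bar>ip d x y\<bar> \<le> (\<Sum>k<d. \<bar>x k * y k\<bar>)"
    unfolding ip_def by (rule sum_abs)
  also have "\<dots> \<le> (\<Sum>k<d. (x k * x k + y k * y k) / 2)"
  proof (rule sum_mono)
    fix k
    have "0 \<le> (\<bar>x k\<bar> - \<bar>y k\<bar>)\<^sup>2" by simp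
    then show "\<bar>x k * y k\<bar> \<le> (x k * x k + y k * y k) / 2"
      by (simp add: power2_eq_square abs_mult algebra_simps)
  qed
  also have "\<dots> = (ip d x x + ip d y y) / 2"
    unfolding ip_def sum.distrib[symmetric] sum_divide_distrib ..
  finally show ?thesis
    using assms by simp
qed

lemma sum_sign_vectors_ip_mult:
  "(\<Sum>e\<in>sign_vectors d. ip d u e * ip d v e) = 2 ^ d * ip d u v"
proof (induction d)
  case 0
  show ?case by (simp add: sum_sign_vectors_0 ip_def)
next
  case (Suc d)
  have "(\<Sum>e\<in>sign_vectors (Suc d). ip (Suc d) u e * ip (Suc d) v e)
      = 2 * (\<Sum>e\<in>sign_vectors d. ip d u e * ip d v e) + 2 * u d * v d * card (sign_vectors d)"
    by (simp add: sum_sign_vectors_Suc ip_Suc_fun_upd algebra_simps sum.distrib sum_distrib_left)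
  then show ?case
    by (simp add: Suc.IH card_sign_vectors ip_Suc algebra_simps)
qed

lemma sum_sign_vectors_ip_power4:
  "(\<Sum>e\<in>sign_vectors d. (ip d u e) ^ 4) \<le> 3 * 2 ^ d * (ip d u u)\<^sup>2"
proof (induction d)
  case 0
  show ?case by (simp add: sum_sign_vectors_0 ip_def)
next
  case (Suc d)
  have "(\<Sum>e\<in>sign_vectors (Suc d). (ip (Suc d) u e) ^ 4)
      = 2 * (\<Sum>e\<in>sign_vectors d. (ip d u e) ^ 4)
        + 12 * (u d)\<^sup>2 * (\<Sum>e\<in>sign_vectors d. ip d u e * ip d u e)
        + 2 * (u d) ^ 4 * card (sign_vectors d)"
    by (simp add: sum_sign_vectors_Suc ip_Suc_fun_upd sum.distrib sum_distrib_left
        algebra_simps power4_eq_xxxx power2_eq_square)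
  also have "\<dots> \<le> 2 * (3 * 2 ^ d * (ip d u u)\<^sup>2) + 12 * (u d)\<^sup>2 * (2 ^ d * ip d u u)
        + 2 * (u d) ^ 4 * 2 ^ d"
    using Suc.IH by (simp add: sum_sign_vectors_ip_mult card_sign_vectors)
  also have "\<dots> = 3 * 2 ^ Suc d * (ip (Suc d) u u)\<^sup>2 - 4 * 2 ^ d * (u d) ^ 4"
    unfolding ip_Suc by (simp add: power2_eq_square power4_eq_xxxx algebra_simps)
  also have "\<dots> \<le> 3 * 2 ^ Suc d * (ip (Suc d) u u)\<^sup>2"
    by simp
  finally show ?case .
qed

definition clip :: "real \<Rightarrow> real \<Rightarrow> real" where
  "clip t x = max (-t) (min t x)"

lemma abs_clip_le: "0 \<le> t \<Longrightarrow> \<bar>clip t x\<bar> \<le> t"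
  unfolding clip_def by auto

lemma clip_sq_le: "0 \<le> t \<Longrightarrow> (clip t x)\<^sup>2 \<le> x\<^sup>2"
  unfolding clip_def abs_le_square_iff[symmetric] by auto

lemma clip_remainder_sq_le:
  assumes "0 \<le> t"
  shows "t\<^sup>2 * (x - clip t x)\<^sup>2 \<le> x ^ 4"
proof (cases "\<bar>x\<bar> \<le> t")
  case True
  then show ?thesis
    unfolding clip_def by auto
next
  case False
  then have "t\<^sup>2 \<le> x\<^sup>2" "(x - clip t x)\<^sup>2 \<le> x\<^sup>2"
    unfolding abs_le_square_iff[symmetric] clip_def using assms by auto
  then have "t\<^sup>2 * (x - clip t x)\<^sup>2 \<le> x\<^sup>2 * x\<^sup>2"
    by (intro mult_mono) auto
  then show ?thesis
    by (simp add: power4_eq_xxxx power2_eq_square mult.assoc)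
qed

lemma sum_sign_vectors_ip_sq: "(\<Sum>e\<in>sign_vectors d. (ip d u e)\<^sup>2) = 2 ^ d * ip d u u"
  using sum_sign_vectors_ip_mult[of d u u] by (simp add: power2_eq_square)

lemma sum_sign_vectors_clip_sq_le:
  "0 \<le> t \<Longrightarrow> (\<Sum>e\<in>sign_vectors d. (clip t (ip d u e))\<^sup>2) \<le> 2 ^ d * ip d u u"
  unfolding sum_sign_vectors_ip_sq[symmetric] by (intro sum_mono clip_sq_le)

lemma sum_sign_vectors_clip_remainder_sq_le:
  assumes "0 \<le> t"
  shows "t\<^sup>2 * (\<Sum>e\<in>sign_vectors d. (ip d u e - clip t (ip d u e))\<^sup>2) \<le> 3 * 2 ^ d * (ip d u u)\<^sup>2"
proof -
  have "t\<^sup>2 * (\<Sum>e\<in>sign_vectors d. (ip d u e - clip t (ip d u e))\<^sup>2) \<le> (\<Sum>e\<in>sign_vectors d. (ip d u e) ^ 4)"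
    unfolding sum_distrib_left by (intro sum_mono clip_remainder_sq_le assms)
  then show ?thesis
    using sum_sign_vectors_ip_power4 order_trans by blast
qed

lemma unit_sign_projection_norms:
  assumes "ip d u u \<le> 1"
  shows "(\<Sum>e\<in>sign_vectors d. (ip d u e)\<^sup>2) \<le> 2 ^ d"
    and "(\<Sum>e\<in>sign_vectors d. (clip 8 (ip d u e))\<^sup>2) \<le> 2 ^ d"
    and "(\<Sum>e\<in>sign_vectors d. (4 * (ip d u e - clip 8 (ip d u e)))\<^sup>2) \<le> 2 ^ d"
proof -
  have "0 \<le> ip d u u" by (rule ip_self_nonneg)
  then have sq: "(ip d u u)\<^sup>2 \<le> 1"
    using assms by (simp add: power_le_one)
  show "(\<Sum>e\<in>sign_vectors d. (ip d u e)\<^sup>2) \<le> 2 ^ d"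
    unfolding sum_sign_vectors_ip_sq using assms by simp
  show "(\<Sum>e\<in>sign_vectors d. (clip 8 (ip d u e))\<^sup>2) \<le> 2 ^ d"
    using sum_sign_vectors_clip_sq_le[of 8 d u] assms by (simp add: order_trans)
  have "64 * (\<Sum>e\<in>sign_vectors d. (ip d u e - clip 8 (ip d u e))\<^sup>2) \<le> 3 * 2 ^ d"
    using sum_sign_vectors_clip_remainder_sq_le[of 8 d u] sq by (simp add: order_trans)
  moreover have "(\<Sum>e\<in>sign_vectors d. (4 * (ip d u e - clip 8 (ip d u e)))\<^sup>2)
      = 16 * (\<Sum>e\<in>sign_vectors d. (ip d u e - clip 8 (ip d u e))\<^sup>2)"
    unfolding power_mult_distrib sum_distrib_left by simp
  moreover have "(0::real) \<le> 2 ^ d" by simp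
  ultimately show "(\<Sum>e\<in>sign_vectors d. (4 * (ip d u e - clip 8 (ip d u e)))\<^sup>2) \<le> 2 ^ d"
    by linarith
qed

section \<open>Vector relaxation and Grothendieck's inequality\<close>

definition vector_form ::
    "nat \<Rightarrow> nat \<Rightarrow> (nat \<Rightarrow> nat \<Rightarrow> real) \<Rightarrow> 'k set \<Rightarrow> (nat \<Rightarrow> 'k \<Rightarrow> real) \<Rightarrow> (nat \<Rightarrow> 'k \<Rightarrow> real) \<Rightarrow> real"
  where "vector_form m n a K u v = (\<Sum>i<m. \<Sum>j<n. a i j * (\<Sum>k\<in>K. u i k * v j k))"

lemma vector_form_lessThan: "vector_form m n a {..<d} u v = (\<Sum>i<m. \<Sum>j<n. a i j * ip d (u i) (v j))"
  unfolding vector_form_def ip_def ..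

lemma vector_form_cmult_left: "vector_form m n a K (\<lambda>i k. c * u i k) v = c * vector_form m n a K u v"
  unfolding vector_form_def by (simp add: sum_distrib_left algebra_simps)

lemma vector_form_cmult_right: "vector_form m n a K u (\<lambda>j k. c * v j k) = c * vector_form m n a K u v"
  unfolding vector_form_def by (simp add: sum_distrib_left algebra_simps)

lemma vector_form_le_sum_abs:
  assumes "\<forall>i<m. ip d (u i) (u i) \<le> 1" "\<forall>j<n. ip d (v j) (v j) \<le> 1"
  shows "vector_form m n a {..<d} u v \<le> (\<Sum>i<m. \<Sum>j<n. \<bar>a i j\<bar>)"
  unfolding vector_form_lessThan
proof (intro sum_mono)
  fix i j
  assume "i \<in> {..<m}" "j \<in> {..<n}"
  then have "\<bar>ip d (u i) (v j)\<bar> \<le> 1"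
    using assms abs_ip_le_one by auto
  then have "\<bar>a i j * ip d (u i) (v j)\<bar> \<le> \<bar>a i j\<bar>"
    by (simp add: abs_mult mult_left_le)
  then show "a i j * ip d (u i) (v j) \<le> \<bar>a i j\<bar>"
    by linarith
qed

text \<open>Unlike in \<open>pdisc0\<close>, the dimension is unrestricted: the rounding argument below works
  in the \<open>2\<^sup>d\<close> coordinates indexed by sign vectors.\<close>

definition sdp_value :: "nat \<Rightarrow> nat \<Rightarrow> (nat \<Rightarrow> nat \<Rightarrow> real) \<Rightarrow> real" where
  "sdp_value m n a = Sup {vector_form m n a {..<d} u v | d u v.
     (\<forall>i<m. ip d (u i) (u i) \<le> 1) \<and> (\<forall>j<n. ip d (v j) (v j) \<le> 1)}"

lemma vector_form_le_sdp_value: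
  assumes "\<forall>i<m. ip d (u i) (u i) \<le> 1" "\<forall>j<n. ip d (v j) (v j) \<le> 1"
  shows "vector_form m n a {..<d} u v \<le> sdp_value m n a"
  unfolding sdp_value_def
proof (rule cSup_upper)
  show "vector_form m n a {..<d} u v \<in> {vector_form m n a {..<d} u v | d u v.
     (\<forall>i<m. ip d (u i) (u i) \<le> 1) \<and> (\<forall>j<n. ip d (v j) (v j) \<le> 1)}"
    using assms by blast
  show "bdd_above {vector_form m n a {..<d} u v | d u v.
     (\<forall>i<m. ip d (u i) (u i) \<le> 1) \<and> (\<forall>j<n. ip d (v j) (v j) \<le> 1)}"
    unfolding bdd_above_def using vector_form_le_sum_abs by blast
qed

lemma sdp_value_least:
  assumes "\<And>d u v. \<forall>i<m. ip d (u i) (u i) \<le> 1 \<Longrightarrow> \<forall>j<n. ip d (v j) (v j) \<le> 1 \<Longrightarrow>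
      vector_form m n a {..<d} u v \<le> b"
  shows "sdp_value m n a \<le> b"
  unfolding sdp_value_def
proof (rule cSup_least)
  have "ip 0 x x \<le> 1" for x
    by (simp add: ip_def)
  then show "{vector_form m n a {..<d} u v | d u v.
     (\<forall>i<m. ip d (u i) (u i) \<le> 1) \<and> (\<forall>j<n. ip d (v j) (v j) \<le> 1)} \<noteq> {}"
    by blast
qed (use assms in blast)

lemma vector_form_le_scaled_sdp_value:
  fixes K :: "'k set"
  assumes "finite K" "r > 0"
    and "\<forall>i<m. (\<Sum>k\<in>K. (u i k)\<^sup>2) \<le> r" "\<forall>j<n. (\<Sum>k\<in>K. (v j k)\<^sup>2) \<le> r"
  shows "vector_form m n a K u v \<le> r * sdp_value m n a"
proof -
  obtain f where f: "bij_betw f {..<card K} K"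
    using ex_bij_betw_nat_finite[OF assms(1)] atLeast0LessThan by auto
  define u' where "u' i l = u i (f l) / sqrt r" for i l
  define v' where "v' j l = v j (f l) / sqrt r" for j l
  have reindex: "(\<Sum>k\<in>K. g k) = (\<Sum>l<card K. g (f l))" for g :: "'k \<Rightarrow> real"
    using sum.reindex_bij_betw[OF f, of g] by simp
  have scale: "(p / sqrt r) * (q / sqrt r) = p * q / r" for p q
    using assms(2) by simp
  have ip_scaled: "ip (card K) (\<lambda>l. p (f l) / sqrt r) (\<lambda>l. q (f l) / sqrt r) = (\<Sum>k\<in>K. p k * q k) / r"
    for p q :: "'k \<Rightarrow> real"
    unfolding ip_def scale reindex sum_divide_distrib ..
  have "vector_form m n a {..<card K} u' v' = vector_form m n a K u v / r"
    unfolding vector_form_lessThan u'_def v'_def ip_scaled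
    by (simp add: vector_form_def flip: sum_divide_distrib)
  then have "vector_form m n a K u v = r * vector_form m n a {..<card K} u' v'"
    using assms(2) by simp
  also have "\<dots> \<le> r * sdp_value m n a"
    using assms(2-4) unfolding u'_def v'_def
    by (intro mult_left_mono vector_form_le_sdp_value) (simp_all add: ip_scaled power2_eq_square)
  finally show ?thesis .
qed

definition infty_to_one_le :: "nat \<Rightarrow> nat \<Rightarrow> (nat \<Rightarrow> nat \<Rightarrow> real) \<Rightarrow> real \<Rightarrow> bool" where
  "infty_to_one_le m n a B \<longleftrightarrow> (\<forall>x y. (\<forall>i<m. \<bar>x i\<bar> \<le> 1) \<longrightarrow> (\<forall>j<n. \<bar>y j\<bar> \<le> 1) \<longrightarrow>
     (\<Sum>i<m. \<Sum>j<n. a i j * x i * y j) \<le> B)"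

lemma infty_to_one_leD:
  assumes "infty_to_one_le m n a B" "\<forall>i<m. \<bar>x i\<bar> \<le> 1" "\<forall>j<n. \<bar>y j\<bar> \<le> 1"
  shows "(\<Sum>i<m. \<Sum>j<n. a i j * x i * y j) \<le> B"
  using assms unfolding infty_to_one_le_def by blast

lemma vector_form_le_of_abs_le:
  fixes K :: "'k set"
  assumes "infty_to_one_le m n a B" "t > 0"
    and "\<forall>i<m. \<forall>k\<in>K. \<bar>u i k\<bar> \<le> t" "\<forall>j<n. \<forall>k\<in>K. \<bar>v j k\<bar> \<le> t"
  shows "vector_form m n a K u v \<le> t\<^sup>2 * B * card K"
proof -
  have "(\<Sum>i<m. \<Sum>j<n. a i j * u i k * v j k) \<le> t\<^sup>2 * B" if "k \<in> K" for k
  proof -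
    have "\<forall>i<m. \<bar>u i k / t\<bar> \<le> 1" "\<forall>j<n. \<bar>v j k / t\<bar> \<le> 1"
      using assms(2-4) that by (simp_all add: abs_divide)
    then have "(\<Sum>i<m. \<Sum>j<n. a i j * (u i k / t) * (v j k / t)) \<le> B"
      by (rule infty_to_one_leD[OF assms(1)])
    moreover have "(\<Sum>i<m. \<Sum>j<n. a i j * u i k * v j k)
        = t\<^sup>2 * (\<Sum>i<m. \<Sum>j<n. a i j * (u i k / t) * (v j k / t))"
      using assms(2) by (simp add: sum_distrib_left power2_eq_square)
    ultimately show ?thesis
      using assms(2) by simp
  qed
  then have "(\<Sum>k\<in>K. \<Sum>i<m. \<Sum>j<n. a i j * u i k * v j k) \<le> (\<Sum>k\<in>K. t\<^sup>2 * B)"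
    by (rule sum_mono)
  moreover have "vector_form m n a K u v = (\<Sum>k\<in>K. \<Sum>i<m. \<Sum>j<n. a i j * u i k * v j k)"
    unfolding vector_form_def sum_distrib_left
    by (subst sum.swap, subst (2) sum.swap) (simp add: mult.assoc)
  ultimately show ?thesis
    by (simp add: mult_ac)
qed

text \<open>Rounding by sign vectors: the projections \<open>\<langle>u, e\<rangle>\<close> of a unit vector, \<open>e \<in> {-1,1}\<^sup>d\<close>,
  have second moment \<open>|u|\<^sup>2\<close> and fourth moment at most \<open>3 |u|\<^sup>4\<close>. Truncated at 8 they are
  bounded, and cost at most \<open>64 B\<close>; the tails beyond 8 have norm at most \<open>1/4\<close>, so each of
  the two cross terms costs at most a quarter of the vector relaxation.\<close>

lemma vector_form_le_box_plus_half_sdp_value: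
  assumes box: "infty_to_one_le m n a B"
    and u: "\<forall>i<m. ip d (u i) (u i) \<le> 1" and v: "\<forall>j<n. ip d (v j) (v j) \<le> 1"
  shows "vector_form m n a {..<d} u v \<le> 64 * B + sdp_value m n a / 2"
proof -
  let ?S = "sdp_value m n a" and ?E = "sign_vectors d" and ?N = "(2::real) ^ d"
  define X where "X i e = clip 8 (ip d (u i) e)" for i e
  define X' where "X' i e = ip d (u i) e - X i e" for i e
  define Y where "Y j e = clip 8 (ip d (v j) e)" for j e
  define Y' where "Y' j e = ip d (v j) e - Y j e" for j e
  have "?N * vector_form m n a {..<d} u v = vector_form m n a ?E (\<lambda>i e. ip d (u i) e) (\<lambda>j e. ip d (v j) e)"
    unfolding vector_form_def sum_sign_vectors_ip_mult
    by (simp add: ip_def sum_distrib_left algebra_simps)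
  also have "\<dots> = vector_form m n a ?E X Y + vector_form m n a ?E X Y'
      + vector_form m n a ?E X' (\<lambda>j e. ip d (v j) e)"
  proof -
    have "ip d (u i) e * ip d (v j) e = X i e * Y j e + X i e * Y' j e + X' i e * ip d (v j) e" for i j e
      unfolding X'_def Y'_def by (simp add: algebra_simps)
    then show ?thesis
      unfolding vector_form_def by (simp add: sum.distrib distrib_left)
  qed
  also have "\<dots> \<le> 64 * B * ?N + ?N * ?S / 4 + ?N * ?S / 4"
  proof -
    have "vector_form m n a ?E X Y \<le> 8\<^sup>2 * B * card ?E"
      using box unfolding X_def Y_def by (intro vector_form_le_of_abs_le) (simp_all add: abs_clip_le)
    then have "vector_form m n a ?E X Y \<le> 64 * B * ?N"
      by (simp add: card_sign_vectors)
    moreover have "vector_form m n a ?E X (\<lambda>j e. 4 * Y' j e) \<le> ?N * ?S"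
      using u v unit_sign_projection_norms unfolding X_def Y'_def Y_def
      by (intro vector_form_le_scaled_sdp_value finite_sign_vectors) simp_all
    moreover have "vector_form m n a ?E (\<lambda>i e. 4 * X' i e) (\<lambda>j e. ip d (v j) e) \<le> ?N * ?S"
      using u v unit_sign_projection_norms unfolding X'_def X_def
      by (intro vector_form_le_scaled_sdp_value finite_sign_vectors) simp_all
    ultimately show ?thesis
      unfolding vector_form_cmult_left vector_form_cmult_right by linarith
  qed
  finally have "?N * vector_form m n a {..<d} u v \<le> ?N * (64 * B + ?S / 2)"
    by (simp add: algebra_simps)
  then show ?thesis
    by (simp add: mult_le_cancel_left_pos)
qed

theorem grothendieck_inequality:
  assumes "infty_to_one_le m n a B"
  shows "sdp_value m n a \<le> 128 * B"
proof -
  have "sdp_value m n a \<le> 64 * B + sdp_value m n a / 2"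
    using vector_form_le_box_plus_half_sdp_value[OF assms] by (rule sdp_value_least)
  then show ?thesis
    by simp
qed

section \<open>Combinatorial discrepancy\<close>

lemma disc_add_complement_left:
  assumes "X \<subseteq> {..<m}"
  shows "disc m n M X Y + disc m n M ({..<m} - X) Y = disc m n M {..<m} Y"
proof -
  have ones: "ones m n M {..<m} Y = ones m n M ({..<m} - X) Y + ones m n M X Y"
    unfolding ones_def by (rule sum.subset_diff[OF assms finite_lessThan])
  have "card {..<m} = card ({..<m} - X) + card X"
    using card_Diff_subset[OF finite_subset[OF assms] assms] card_mono[OF finite_lessThan assms] by simp
  then have card: "real (card {..<m}) = real (card ({..<m} - X)) + real (card X)"
    by simp
  show ?thesis
    unfolding disc_def ones card by (simp add: algebra_simps)
qed

lemma disc_add_complement_right: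
  assumes "Y \<subseteq> {..<n}"
  shows "disc m n M X Y + disc m n M X ({..<n} - Y) = disc m n M X {..<n}"
proof -
  have ones: "ones m n M X {..<n} = ones m n M X ({..<n} - Y) + ones m n M X Y"
    unfolding ones_def sum.distrib[symmetric] by (intro sum.cong refl sum.subset_diff assms) simp
  have "card {..<n} = card ({..<n} - Y) + card Y"
    using card_Diff_subset[OF finite_subset[OF assms] assms] card_mono[OF finite_lessThan assms] by simp
  then have card: "real (card {..<n}) = real (card ({..<n} - Y)) + real (card Y)"
    by simp
  show ?thesis
    unfolding disc_def ones card by (simp add: algebra_simps)
qed

lemma disc_full: "disc m n M {..<m} {..<n} = 0"
  by (cases "m = 0 \<or> n = 0") (auto simp: disc_def density_def ones_def)

lemma disc_complements_sum_zero:
  assumes "X \<subseteq> {..<m}" "Y \<subseteq> {..<n}"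
  shows "disc m n M X Y + disc m n M ({..<m} - X) Y + disc m n M X ({..<n} - Y)
    + disc m n M ({..<m} - X) ({..<n} - Y) = 0"
  using disc_add_complement_right[OF assms(2), of m M X] disc_add_complement_right[OF assms(2), of m M "{..<m} - X"]
    disc_add_complement_left[OF assms(1), of n M "{..<n}"] disc_full[of m n M]
  by linarith

lemma finite_disc_values: "finite {f (disc m n M X Y) | X Y. X \<subseteq> {..<m} \<and> Y \<subseteq> {..<n}}"
  by (rule finite_image_set2) (simp_all add: finite_Collect_subsets)

lemma disc_le_disc_plus:
  assumes "X \<subseteq> {..<m}" "Y \<subseteq> {..<n}"
  shows "disc m n M X Y \<le> disc_plus m n M"
  unfolding disc_plus_def using assms by (intro Max_ge finite_disc_values[of "\<lambda>x. x"]) blast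

lemma neg_disc_le_disc_minus:
  assumes "X \<subseteq> {..<m}" "Y \<subseteq> {..<n}"
  shows "- disc m n M X Y \<le> disc_minus m n M"
  unfolding disc_minus_def using assms by (intro Max_ge finite_disc_values[of uminus]) blast

lemma disc_plus_attained: "\<exists>X Y. X \<subseteq> {..<m} \<and> Y \<subseteq> {..<n} \<and> disc_plus m n M = disc m n M X Y"
proof -
  have "disc_plus m n M \<in> {disc m n M X Y | X Y. X \<subseteq> {..<m} \<and> Y \<subseteq> {..<n}}"
    unfolding disc_plus_def by (intro Max_in finite_disc_values[of "\<lambda>x. x"]) blast
  then show ?thesis
    by blast
qed

lemma disc_minus_attained: "\<exists>X Y. X \<subseteq> {..<m} \<and> Y \<subseteq> {..<n} \<and> disc_minus m n M = - disc m n M X Y"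
proof -
  have "disc_minus m n M \<in> {- disc m n M X Y | X Y. X \<subseteq> {..<m} \<and> Y \<subseteq> {..<n}}"
    unfolding disc_minus_def by (intro Max_in finite_disc_values[of uminus]) blast
  then show ?thesis
    by blast
qed

lemma disc_minus_le_three_disc_plus: "disc_minus m n M \<le> 3 * disc_plus m n M"
proof -
  obtain X Y where XY: "X \<subseteq> {..<m}" "Y \<subseteq> {..<n}" "disc_minus m n M = - disc m n M X Y"
    using disc_minus_attained[of m n M] by blast
  have "disc m n M ({..<m} - X) Y \<le> disc_plus m n M" "disc m n M X ({..<n} - Y) \<le> disc_plus m n M"
    "disc m n M ({..<m} - X) ({..<n} - Y) \<le> disc_plus m n M"
    using XY by (auto intro: disc_le_disc_plus)
  then show ?thesis
    using disc_complements_sum_zero[OF XY(1,2), of M] XY(3) by linarith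
qed

lemma disc_plus_le_three_disc_minus: "disc_plus m n M \<le> 3 * disc_minus m n M"
proof -
  obtain X Y where XY: "X \<subseteq> {..<m}" "Y \<subseteq> {..<n}" "disc_plus m n M = disc m n M X Y"
    using disc_plus_attained[of m n M] by blast
  have "- disc m n M ({..<m} - X) Y \<le> disc_minus m n M" "- disc m n M X ({..<n} - Y) \<le> disc_minus m n M"
    "- disc m n M ({..<m} - X) ({..<n} - Y) \<le> disc_minus m n M"
    using XY by (auto intro: neg_disc_le_disc_minus)
  then show ?thesis
    using disc_complements_sum_zero[OF XY(1,2), of M] XY(3) by linarith
qed

lemma weighted_sum_le_sum_positive:
  fixes x c :: "'a \<Rightarrow> real"
  assumes "finite I" "\<forall>i\<in>I. 0 \<le> x i \<and> x i \<le> 1"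
  shows "(\<Sum>i\<in>I. x i * c i) \<le> (\<Sum>i\<in>{i\<in>I. 0 < c i}. c i)"
proof -
  have "(\<Sum>i\<in>I. x i * c i) \<le> (\<Sum>i\<in>I. if 0 < c i then c i else 0)"
    using assms(2) by (intro sum_mono) (auto simp: mult_left_le_one_le mult_nonneg_nonpos)
  also have "\<dots> = (\<Sum>i\<in>{i\<in>I. 0 < c i}. c i)"
    using assms(1) by (simp add: sum.inter_filter)
  finally show ?thesis .
qed

lemma bilinear_le_rectangle_sum:
  fixes a :: "'a \<Rightarrow> 'b \<Rightarrow> real"
  assumes "finite I" "finite J" "\<forall>i\<in>I. 0 \<le> x i \<and> x i \<le> 1" "\<forall>j\<in>J. 0 \<le> y j \<and> y j \<le> 1"
  shows "\<exists>X\<subseteq>I. \<exists>Y\<subseteq>J. (\<Sum>i\<in>I. \<Sum>j\<in>J. a i j * x i * y j) \<le> (\<Sum>i\<in>X. \<Sum>j\<in>Y. a i j)"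
proof -
  define X where "X = {i\<in>I. 0 < (\<Sum>j\<in>J. a i j * y j)}"
  define Y where "Y = {j\<in>J. 0 < (\<Sum>i\<in>X. a i j)}"
  have "(\<Sum>i\<in>I. \<Sum>j\<in>J. a i j * x i * y j) = (\<Sum>i\<in>I. x i * (\<Sum>j\<in>J. a i j * y j))"
    by (simp add: sum_distrib_left mult_ac)
  also have "\<dots> \<le> (\<Sum>i\<in>X. \<Sum>j\<in>J. a i j * y j)"
    unfolding X_def by (rule weighted_sum_le_sum_positive[OF assms(1,3)])
  also have "\<dots> = (\<Sum>j\<in>J. y j * (\<Sum>i\<in>X. a i j))"
    unfolding sum_distrib_left by (subst sum.swap) (simp add: mult_ac)
  also have "\<dots> \<le> (\<Sum>j\<in>Y. \<Sum>i\<in>X. a i j)"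
    unfolding Y_def by (rule weighted_sum_le_sum_positive[OF assms(2,4)])
  also have "\<dots> = (\<Sum>i\<in>X. \<Sum>j\<in>Y. a i j)"
    by (rule sum.swap)
  finally have "(\<Sum>i\<in>I. \<Sum>j\<in>J. a i j * x i * y j) \<le> (\<Sum>i\<in>X. \<Sum>j\<in>Y. a i j)" .
  moreover have "X \<subseteq> I" "Y \<subseteq> J"
    unfolding X_def Y_def by auto
  ultimately show ?thesis
    by blast
qed

definition centered :: "nat \<Rightarrow> nat \<Rightarrow> (nat \<Rightarrow> nat \<Rightarrow> real) \<Rightarrow> nat \<Rightarrow> nat \<Rightarrow> real" where
  "centered m n M i j = M i j - density m n M"

lemma sum_centered_eq_disc:
  assumes "finite X" "finite Y"
  shows "(\<Sum>i\<in>X. \<Sum>j\<in>Y. centered m n M i j) = disc m n M X Y"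
  unfolding centered_def disc_def ones_def using assms by (simp add: sum_subtractf)

lemma centered_form_le_disc_plus:
  assumes "\<forall>i<m. 0 \<le> x i \<and> x i \<le> 1" "\<forall>j<n. 0 \<le> y j \<and> y j \<le> 1"
  shows "(\<Sum>i<m. \<Sum>j<n. centered m n M i j * x i * y j) \<le> disc_plus m n M"
proof -
  obtain X Y where "X \<subseteq> {..<m}" "Y \<subseteq> {..<n}"
    and le: "(\<Sum>i<m. \<Sum>j<n. centered m n M i j * x i * y j) \<le> (\<Sum>i\<in>X. \<Sum>j\<in>Y. centered m n M i j)"
    using bilinear_le_rectangle_sum[of "{..<m}" "{..<n}" x y "centered m n M"] assms by auto
  then have "(\<Sum>i\<in>X. \<Sum>j\<in>Y. centered m n M i j) \<le> disc_plus m n M"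
    by (simp add: sum_centered_eq_disc finite_subset disc_le_disc_plus)
  with le show ?thesis
    by linarith
qed

lemma neg_centered_form_le_disc_minus:
  assumes "\<forall>i<m. 0 \<le> x i \<and> x i \<le> 1" "\<forall>j<n. 0 \<le> y j \<and> y j \<le> 1"
  shows "- (\<Sum>i<m. \<Sum>j<n. centered m n M i j * x i * y j) \<le> disc_minus m n M"
proof -
  obtain X Y where "X \<subseteq> {..<m}" "Y \<subseteq> {..<n}"
    and le: "(\<Sum>i<m. \<Sum>j<n. - centered m n M i j * x i * y j) \<le> (\<Sum>i\<in>X. \<Sum>j\<in>Y. - centered m n M i j)"
    using bilinear_le_rectangle_sum[of "{..<m}" "{..<n}" x y "\<lambda>i j. - centered m n M i j"] assms by auto
  then have "(\<Sum>i\<in>X. \<Sum>j\<in>Y. - centered m n M i j) \<le> disc_minus m n M"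
    by (simp add: sum_negf sum_centered_eq_disc finite_subset neg_disc_le_disc_minus)
  with le show ?thesis
    by (simp add: sum_negf)
qed

lemma infty_to_one_le_centered:
  "infty_to_one_le m n (centered m n M) (2 * disc_plus m n M + 2 * disc_minus m n M)"
  unfolding infty_to_one_le_def
proof (intro allI impI)
  fix x y :: "nat \<Rightarrow> real"
  assume "\<forall>i<m. \<bar>x i\<bar> \<le> 1" "\<forall>j<n. \<bar>y j\<bar> \<le> 1"
  define x\<^sub>p x\<^sub>n y\<^sub>p y\<^sub>n where "x\<^sub>p i = max (x i) 0" and "x\<^sub>n i = max (- x i) 0"
    and "y\<^sub>p j = max (y j) 0" and "y\<^sub>n j = max (- y j) 0" for i j
  have parts: "\<forall>i<m. 0 \<le> x\<^sub>p i \<and> x\<^sub>p i \<le> 1" "\<forall>i<m. 0 \<le> x\<^sub>n i \<and> x\<^sub>n i \<le> 1"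
    "\<forall>j<n. 0 \<le> y\<^sub>p j \<and> y\<^sub>p j \<le> 1" "\<forall>j<n. 0 \<le> y\<^sub>n j \<and> y\<^sub>n j \<le> 1"
    using \<open>\<forall>i<m. \<bar>x i\<bar> \<le> 1\<close> \<open>\<forall>j<n. \<bar>y j\<bar> \<le> 1\<close> unfolding x\<^sub>p_def x\<^sub>n_def y\<^sub>p_def y\<^sub>n_def by auto
  let ?F = "\<lambda>x y. \<Sum>i<m. \<Sum>j<n. centered m n M i j * x i * y j"
  have "?F x y = ?F x\<^sub>p y\<^sub>p - ?F x\<^sub>p y\<^sub>n - ?F x\<^sub>n y\<^sub>p + ?F x\<^sub>n y\<^sub>n"
    unfolding x\<^sub>p_def x\<^sub>n_def y\<^sub>p_def y\<^sub>n_def sum_subtractf[symmetric] sum.distrib[symmetric]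
    by (intro sum.cong refl) (simp add: max_def algebra_simps)
  then show "?F x y \<le> 2 * disc_plus m n M + 2 * disc_minus m n M"
    using centered_form_le_disc_plus[OF parts(1,3), of M] centered_form_le_disc_plus[OF parts(2,4), of M]
      neg_centered_form_le_disc_minus[OF parts(1,4), of M] neg_centered_form_le_disc_minus[OF parts(2,3), of M]
    by linarith
qed

section \<open>Vector discrepancy\<close>

lemma pdisc0_eq_Sup_vector_form:
  "pdisc0 m n M = Sup {vector_form m n (centered m n M) {..<m+n} v w | v w.
     (\<forall>i<m. ip (m+n) (v i) (v i) \<le> 1) \<and> (\<forall>j<n. ip (m+n) (w j) (w j) \<le> 1)}"
  unfolding pdisc0_def vector_form_lessThan centered_def real_sqrt_le_1_iff
  by (simp add: left_diff_distrib sum_subtractf sum_distrib_left)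

lemma pdisc0_le_sdp_value: "pdisc0 m n M \<le> sdp_value m n (centered m n M)"
  unfolding pdisc0_eq_Sup_vector_form
proof (rule cSup_least)
  have "vector_form m n (centered m n M) {..<m+n} (\<lambda>_ _. 0) (\<lambda>_ _. 0) \<in> {vector_form m n (centered m n M) {..<m+n} v w | v w.
     (\<forall>i<m. ip (m+n) (v i) (v i) \<le> 1) \<and> (\<forall>j<n. ip (m+n) (w j) (w j) \<le> 1)}"
    by (force simp: ip_def)
  then show "{vector_form m n (centered m n M) {..<m+n} v w | v w.
     (\<forall>i<m. ip (m+n) (v i) (v i) \<le> 1) \<and> (\<forall>j<n. ip (m+n) (w j) (w j) \<le> 1)} \<noteq> {}"
    by blast
next
  fix x
  assume "x \<in> {vector_form m n (centered m n M) {..<m+n} v w | v w.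
     (\<forall>i<m. ip (m+n) (v i) (v i) \<le> 1) \<and> (\<forall>j<n. ip (m+n) (w j) (w j) \<le> 1)}"
  then show "x \<le> sdp_value m n (centered m n M)"
    using vector_form_le_sdp_value by blast
qed

lemma vector_form_le_pdisc0:
  assumes "\<forall>i<m. ip (m+n) (v i) (v i) \<le> 1" "\<forall>j<n. ip (m+n) (w j) (w j) \<le> 1"
  shows "vector_form m n (centered m n M) {..<m+n} v w \<le> pdisc0 m n M"
  unfolding pdisc0_eq_Sup_vector_form
proof (rule cSup_upper)
  show "bdd_above {vector_form m n (centered m n M) {..<m+n} v w | v w.
     (\<forall>i<m. ip (m+n) (v i) (v i) \<le> 1) \<and> (\<forall>j<n. ip (m+n) (w j) (w j) \<le> 1)}"
  proof (rule bdd_aboveI)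
    fix x
    assume "x \<in> {vector_form m n (centered m n M) {..<m+n} v w | v w.
       (\<forall>i<m. ip (m+n) (v i) (v i) \<le> 1) \<and> (\<forall>j<n. ip (m+n) (w j) (w j) \<le> 1)}"
    then show "x \<le> sdp_value m n (centered m n M)"
      using vector_form_le_sdp_value by blast
  qed
qed (use assms in blast)

lemma scaled_disc_le_pdisc0:
  assumes "X \<subseteq> {..<m}" "Y \<subseteq> {..<n}" "\<bar>s\<bar> \<le> 1"
  shows "s * disc m n M X Y \<le> pdisc0 m n M"
proof (cases "m + n = 0")
  case True
  then have "s * disc m n M X Y = vector_form m n (centered m n M) {..<m+n} (\<lambda>_ _. 0) (\<lambda>_ _. 0)"
    using assms(1) by (simp add: disc_def ones_def vector_form_def)
  also have "\<dots> \<le> pdisc0 m n M"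
    by (rule vector_form_le_pdisc0) (simp_all add: ip_def)
  finally show ?thesis .
next
  case False
  define e :: "nat \<Rightarrow> real" where "e k = (if k = 0 then 1 else 0)" for k
  define v where "v i k = (if i \<in> X then e k else 0)" for i k
  define w where "w j k = (if j \<in> Y then s * e k else 0)" for j k
  have ip_e: "ip (m+n) (\<lambda>k. c * e k) (\<lambda>k. c' * e k) = c * c'" for c c'
    using False unfolding ip_def e_def by (simp add: if_distrib cong: if_cong)
  have ip_vw: "ip (m+n) (v i) (w j) = (if i \<in> X \<and> j \<in> Y then s else 0)" for i j
    using ip_e[of 1 s] unfolding v_def w_def by (cases "i \<in> X"; cases "j \<in> Y") (simp_all add: ip_def)
  have "ip (m+n) (v i) (v i) = (if i \<in> X then 1 else 0)" for i
    using ip_e[of 1 1] unfolding v_def by (cases "i \<in> X") (simp_all add: ip_def)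
  moreover have "ip (m+n) (w j) (w j) = (if j \<in> Y then s * s else 0)" for j
    using ip_e[of s s] unfolding w_def by (cases "j \<in> Y") (simp_all add: ip_def)
  moreover have "s * s \<le> 1"
    using assms(3) by (simp flip: power2_eq_square add: abs_square_le_1)
  ultimately have units: "\<forall>i<m. ip (m+n) (v i) (v i) \<le> 1" "\<forall>j<n. ip (m+n) (w j) (w j) \<le> 1"
    by simp_all
  have "vector_form m n (centered m n M) {..<m+n} v w
      = (\<Sum>i<m. if i \<in> X then (\<Sum>j<n. if j \<in> Y then s * centered m n M i j else 0) else 0)"
    unfolding vector_form_lessThan ip_vw by (auto intro!: sum.cong)
  also have "\<dots> = s * (\<Sum>i\<in>X. \<Sum>j\<in>Y. centered m n M i j)"
    using assms(1,2)
    by (simp add: sum.inter_restrict[OF finite_lessThan, symmetric] Int_absorb1 sum_distrib_left)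
  also have "\<dots> = s * disc m n M X Y"
    using assms(1,2) by (simp add: sum_centered_eq_disc finite_subset)
  finally show ?thesis
    using vector_form_le_pdisc0[OF units, of M] by simp
qed

lemma disc_plus_le_pdisc0: "disc_plus m n M \<le> pdisc0 m n M"
  using disc_plus_attained[of m n M] scaled_disc_le_pdisc0[of _ m _ n 1 M] by auto

lemma disc_minus_le_pdisc0: "disc_minus m n M \<le> pdisc0 m n M"
  using disc_minus_attained[of m n M] scaled_disc_le_pdisc0[of _ m _ n "-1" M] by auto

lemma pdisc0_le_disc_plus_disc_minus: "pdisc0 m n M \<le> 256 * disc_plus m n M + 256 * disc_minus m n M"
  using pdisc0_le_sdp_value[of m n M] grothendieck_inequality[OF infty_to_one_le_centered, of m n M]
  by simp

theorem claim2p5: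
  "\<exists>c1 c2 :: real. c1 > 0 \<and> c2 > 0 \<and>
     (\<forall>(m::nat) (n::nat) (M :: nat \<Rightarrow> nat \<Rightarrow> real).
        (\<forall>i<m. \<forall>j<n. M i j \<in> {0, 1}) \<longrightarrow>
          c1 * disc_plus m n M \<le> pdisc0 m n M \<and> pdisc0 m n M \<le> c2 * disc_plus m n M \<and>
          c1 * disc_minus m n M \<le> pdisc0 m n M \<and> pdisc0 m n M \<le> c2 * disc_minus m n M)"
proof -
  \<comment> \<open>The bounds hold for every real matrix.\<close>
  have "disc_plus m n M \<le> pdisc0 m n M \<and> pdisc0 m n M \<le> 1024 * disc_plus m n M \<and>
      disc_minus m n M \<le> pdisc0 m n M \<and> pdisc0 m n M \<le> 1024 * disc_minus m n M" for m n M
    using disc_plus_le_pdisc0[of m n M] disc_minus_le_pdisc0[of m n M] pdisc0_le_disc_plus_disc_minus[of m n M]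
      disc_minus_le_three_disc_plus[of m n M] disc_plus_le_three_disc_minus[of m n M]
    by (intro conjI; linarith)
  then show ?thesis
    by (intro exI[of _ 1] exI[of _ 1024]) simp
qed

end
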